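(* Let $b>1$, $p\ge1$, $R\subseteq\{0,\ldots,p-1\}$. Let $k$ be the greatest divisor of $p$ coprime with $b$, $d=p/k$, and $j$ the least integer $j\ge0$ such that $d$ divides $b^j$. If $s,s'$ are states of $\mathcal{A}_{R,p}$ with $s\equiv s'\pmod k$, then $s$ and $s'$ are $j$-ultimately-equivalent.
   Context: $A_b=\{0,\ldots,b-1\}$. $\mathcal{A}_{R,p}$: complete deterministic automaton over $A_b$ with states $\{0,\ldots,p-1\}$, initial $0$, final $R$, transitions $n\xrightarrow{a}(nb+a)\bmod p$. For an integer $m\ge0$, two states $s,s'$ are $m$-ultimately-equivalent if for every word $u$ with $|u|\ge m$, $s\cdot u=s'\cdot u$, where $s\cdot u$ is the state reached from $s$ by reading $u$. *)

theory Defs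
  imports Main
begin

record automaton =
  alph :: "nat set"
  states :: "nat set"
  init :: nat
  finals :: "nat set"
  trans :: "nat \<Rightarrow> nat \<Rightarrow> nat"

definition A_Rp :: "nat \<Rightarrow> nat set \<Rightarrow> nat \<Rightarrow> automaton" where
  "A_Rp b R p = \<lparr> alph = {0..<b}, states = {0..<p}, init = 0, finals = R,
                  trans = (\<lambda>n a. (n * b + a) mod p) \<rparr>"

definition run :: "automaton \<Rightarrow> nat \<Rightarrow> nat list \<Rightarrow> nat" where
  "run A s u = foldl (trans A) s u"

definition ult_equiv :: "automaton \<Rightarrow> nat \<Rightarrow> nat \<Rightarrow> nat \<Rightarrow> bool" where
  "ult_equiv A m s s' \<longleftrightarrow>
     (\<forall>u. set u \<subseteq> alph A \<longrightarrow> length u \<ge> m \<longrightarrow> run A s u = run A s' u)"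

end

theory Submission
  imports Defs "HOL-Computational_Algebra.Primes" "HOL-Number_Theory.Cong"
begin

text \<open>Reading u from s leads to (s * b^|u| + [u]_b) mod p, where [u]_b is the value of u in
  base b. Hence s and s' reach the same state on every word of length n as soon as
  s b^n \<equiv> s' b^n (mod p). Writing p = k d with k the greatest divisor of p coprime to b,
  every prime factor of d divides b, so d divides b^d and thus b^j; then k | s - s' and
  d | b^n for n \<ge> j give p | (s - s') b^n.\<close>

lemma foldl_base_value:
  fixes b t :: nat
  shows "foldl (\<lambda>n a. n * b + a) t u = t * b ^ length u + foldl (\<lambda>n a. n * b + a) 0 u"
proof (induction u arbitrary: t)
  case Nil
  then show ?case by simp
next
  case (Cons a u)
  have "foldl (\<lambda>n a. n * b + a) t (a # u)
          = (t * b + a) * b ^ length u + foldl (\<lambda>n a. n * b + a) 0 u"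
    using Cons.IH[of "t * b + a"] by simp
  also have "\<dots> = t * b ^ length (a # u) + (a * b ^ length u + foldl (\<lambda>n a. n * b + a) 0 u)"
    by (simp add: algebra_simps)
  also have "\<dots> = t * b ^ length (a # u) + foldl (\<lambda>n a. n * b + a) 0 (a # u)"
    using Cons.IH[of a] by simp
  finally show ?case .
qed

lemma foldl_mod_base_value:
  fixes b p s :: nat
  assumes "s < p"
  shows "foldl (\<lambda>n a. (n * b + a) mod p) s u
           = (s * b ^ length u + foldl (\<lambda>n a. n * b + a) 0 u) mod p"
  using assms
proof (induction u arbitrary: s)
  case Nil
  then show ?case by simp
next
  case (Cons a u)
  let ?v = "foldl (\<lambda>n a. n * b + a) 0 u"
  have "(s * b + a) mod p < p" using Cons.prems by simp
  then have "foldl (\<lambda>n a. (n * b + a) mod p) s (a # u)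
               = ((s * b + a) mod p * b ^ length u + ?v) mod p"
    using Cons.IH by simp
  also have "\<dots> = ((s * b + a) * b ^ length u + ?v) mod p"
    by (metis mod_add_left_eq mod_mult_left_eq)
  also have "\<dots> = (s * b ^ length (a # u) + foldl (\<lambda>n a. n * b + a) 0 (a # u)) mod p"
    using foldl_base_value[of b a u] by (simp add: algebra_simps)
  finally show ?case .
qed

lemma run_A_Rp_eqI:
  fixes b p s s' :: nat
  assumes "s < p" "s' < p" "[s * b ^ length u = s' * b ^ length u] (mod p)"
  shows "run (A_Rp b R p) s u = run (A_Rp b R p) s' u"
proof -
  let ?v = "foldl (\<lambda>n a. n * b + a) 0 u"
  have "(s * b ^ length u + ?v) mod p = (s' * b ^ length u + ?v) mod p"
    using assms(3) unfolding cong_def by (rule mod_add_cong) simp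
  then show ?thesis
    using foldl_mod_base_value[OF assms(1)] foldl_mod_base_value[OF assms(2)]
    by (simp add: run_def A_Rp_def)
qed

lemma cong_mult_right_mult_modulus:
  fixes a a' c k d :: nat
  assumes "[a = a'] (mod k)" "d dvd c"
  shows "[a * c = a' * c] (mod k * d)"
proof -
  have "int k dvd int a - int a'" using assms(1) by (simp add: cong_iff_dvd_diff flip: cong_int_iff)
  then have "int k * int d dvd (int a - int a') * int c"
    using assms(2) by (simp add: mult_dvd_mono)
  then show ?thesis
    by (simp add: cong_iff_dvd_diff cong_int_iff[symmetric] left_diff_distrib)
qed

lemma dvd_power_if_prime_factors_dvd:
  fixes d b :: nat
  assumes "d > 0" "b > 0" and prime_dvd: "\<And>q. prime q \<Longrightarrow> q dvd d \<Longrightarrow> q dvd b"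
  shows "d dvd b ^ d"
proof (rule multiplicity_le_imp_dvd)
  show "d \<noteq> 0" using assms by simp
  fix q :: nat assume q: "prime q"
  show "multiplicity q d \<le> multiplicity q (b ^ d)"
  proof (cases "q dvd d")
    case False
    then show ?thesis by (simp add: not_dvd_imp_multiplicity_0)
  next
    case True
    have "multiplicity q b \<ge> 1"
      using prime_dvd[OF q True] q assms(2) by (simp add: Suc_le_eq prime_multiplicity_gt_zero_iff)
    have "multiplicity q d < 2 ^ multiplicity q d" by (rule less_exp)
    also have "\<dots> \<le> q ^ multiplicity q d"
      using prime_ge_2_nat[OF q] by (simp add: power_mono)
    also have "\<dots> \<le> d" using multiplicity_dvd assms(1) by (rule dvd_imp_le)
    also have "\<dots> \<le> d * multiplicity q b" using \<open>multiplicity q b \<ge> 1\<close> by simp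
    also have "\<dots> = multiplicity q (b ^ d)"
      using q assms(2) by (simp add: prime_elem_multiplicity_power_distrib)
    finally show ?thesis by simp
  qed
qed

lemma greatest_coprime_divisor:
  fixes p b :: nat
  assumes "p > 0"
  defines "k \<equiv> GREATEST k. k dvd p \<and> coprime k b"
  shows "k dvd p" and "coprime k b" and "\<And>y. y dvd p \<Longrightarrow> coprime y b \<Longrightarrow> y \<le> k"
proof -
  let ?P = "\<lambda>k. k dvd p \<and> coprime k b"
  have bound: "\<And>y. ?P y \<Longrightarrow> y \<le> p" using assms(1) by (simp add: dvd_imp_le)
  have "?P 1" by simp
  then have "?P k" unfolding k_def using bound by (rule GreatestI_nat)
  then show "k dvd p" and "coprime k b" by simp_all
  show "y \<le> k" if "y dvd p" "coprime y b" for y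
    unfolding k_def using that bound by (blast intro: Greatest_le_nat)
qed

lemma prime_dvd_cofactor_of_greatest_coprime_divisor:
  fixes p b k q :: nat
  assumes "p > 0" "k dvd p" "coprime k b"
    and greatest: "\<And>y. y dvd p \<Longrightarrow> coprime y b \<Longrightarrow> y \<le> k"
    and "prime q" "q dvd p div k"
  shows "q dvd b"
proof (rule ccontr)
  have "k > 0" using assms(1,2) by (auto intro: Nat.gr0I)
  assume "\<not> q dvd b"
  then have "coprime (q * k) b" using assms(3,5) by (simp add: prime_imp_coprime)
  moreover have "q * k dvd p" using assms(2,6) \<open>k > 0\<close> by (simp add: dvd_div_iff_mult)
  ultimately have "q * k \<le> k" by (rule greatest[rotated])
  then show False using \<open>k > 0\<close> prime_gt_1_nat[OF assms(5)] by simp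
qed

theorem lemma21:
  fixes b p k d j s s' :: nat and R :: "nat set"
  assumes "b > 1" and "p \<ge> 1" and "R \<subseteq> {0..<p}"
    and "k = (GREATEST k. k dvd p \<and> coprime k b)"
    and "d = p div k"
    and "j = (LEAST j. d dvd b ^ j)"
    and "s \<in> {0..<p}" and "s' \<in> {0..<p}"
    and "s mod k = s' mod k"
  shows "ult_equiv (A_Rp b R p) j s s'"
proof -
  have "p > 0" using assms(2) by simp
  note k = greatest_coprime_divisor[OF \<open>p > 0\<close>, where b = b, folded assms(4)]
  have p_eq: "p = k * d" using k(1) assms(5) by simp
  have "d > 0" using p_eq \<open>p > 0\<close> by (auto intro: Nat.gr0I)
  have "d dvd b ^ d"
  proof (rule dvd_power_if_prime_factors_dvd)
    show "d > 0" "b > 0" using \<open>d > 0\<close> assms(1) by simp_all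
    show "q dvd b" if "prime q" "q dvd d" for q
      using prime_dvd_cofactor_of_greatest_coprime_divisor[OF \<open>p > 0\<close> k that(1)] that(2) assms(5)
      by simp
  qed
  then have "d dvd b ^ j" unfolding assms(6) by (rule LeastI)
  show ?thesis unfolding ult_equiv_def
  proof (intro allI impI)
    fix u :: "nat list" assume "length u \<ge> j"
    then have "d dvd b ^ length u"
      using \<open>d dvd b ^ j\<close> assms(1) by (meson dvd_trans le_imp_power_dvd)
    moreover have "[s = s'] (mod k)" using assms(9) by (simp only: cong_def)
    ultimately have "[s * b ^ length u = s' * b ^ length u] (mod p)"
      unfolding p_eq by (simp add: cong_mult_right_mult_modulus)
    then show "run (A_Rp b R p) s u = run (A_Rp b R p) s' u"
      using assms(7,8) by (intro run_A_Rp_eqI) simp_all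
  qed
qed

end
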